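(* Let ancillae $A_1,\dots,A_n$ consecutively measure a $d$-dimensional prepared quantum system $Q$, and let the ancilla $A_i$ be measured (amplified) by a detector $D_i$. Then for every $i$, $S(A_i)=S(D_i)$.
   Context: $Q$ is $d$-dimensional, initially in $|Q\rangle=\sum_{x_1}\alpha^{(1)}_{x_1}|\widetilde{x}_1\rangle$; ancilla $A_i$ measures in the orthonormal basis $\{|\widetilde{x}_i\rangle\}$ with $U^{(i)}_{x_{i-1}x_i}=\langle\widetilde{x}_i|\widetilde{x}_{i-1}\rangle$ unitary, via the unitary $\sum_x|\widetilde{x}_i\rangle\langle\widetilde{x}_i|\otimes U_x$, $U_x|0\rangle=|x\rangle$ on $Q$ and the $d$-dimensional ancilla (initially $|0\rangle$), consecutively, yielding $\sum_{x_1,\dots,x_n}\alpha^{(1)}_{x_1}U^{(2)}_{x_1x_2}\cdots U^{(n)}_{x_{n-1}x_n}|\widetilde{x}_n\rangle_Q|x_1\rangle_{A_1}\cdots|x_n\rangle_{A_n}$. Amplification by $D_i$ (initially $|0\rangle$) is the unitary $|x\rangle_{A_i}|0\rangle_{D_i}\mapsto|x\rangle_{A_i}|x\rangle_{D_i}$. $S$ denotes von Neumann entropy (log base $d$) of reduced states. *)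

theory Defs
  imports Complex_Main "HOL-Library.FuncSet" "Jordan_Normal_Form.Spectral_Radius"
begin

(* Von Neumann entropy (logarithm base d) of a density matrix rho:
   S(rho) = - sum over eigenvalues lambda (with algebraic multiplicity)
   of lambda * log_d lambda, with the convention 0 log 0 = 0. *)
definition eta :: "nat \<Rightarrow> real \<Rightarrow> real" where
  "eta d t = (if t \<le> 0 then 0 else t * log (real d) t)"

definition vn_entropy :: "nat \<Rightarrow> complex mat \<Rightarrow> real" where
  "vn_entropy d \<rho> = - (\<Sum>l\<in>spectrum \<rho>.
      real (order l (char_poly \<rho>)) * eta d (Re l))"

definition cfg :: "nat \<Rightarrow> nat \<Rightarrow> (nat \<Rightarrow> nat) set" where
  "cfg n d = Pi\<^sub>E {1..n} (\<lambda>_. {..<d})"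

(* e i x k : k-th component (w.r.t. the standard basis of C^d) of the basis
   vector |x~_i> used by ancilla A_i. *)
definition orthonormal_basis :: "nat \<Rightarrow> (nat \<Rightarrow> nat \<Rightarrow> complex) \<Rightarrow> bool" where
  "orthonormal_basis d v \<longleftrightarrow> (\<forall>x<d. \<forall>y<d.
      (\<Sum>k<d. cnj (v x k) * v y k) = (if x = y then 1 else 0))"

definition Umat :: "nat \<Rightarrow> (nat \<Rightarrow> nat \<Rightarrow> nat \<Rightarrow> complex) \<Rightarrow> nat \<Rightarrow> nat \<Rightarrow> nat \<Rightarrow> complex" where
  "Umat d e i x y = (\<Sum>k<d. cnj (e i y k) * e (i - 1) x k)"

(* State of Q A_1 ... A_n after the n consecutive measurements:
   sum_x alpha_{x_1} U^(2)_{x_1 x_2} ... U^(n)_{x_{n-1} x_n} |x~_n>_Q |x_1> ... |x_n>.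
   Component at Q-index q (standard basis) and ancilla configuration a. *)
definition measured_state ::
  "nat \<Rightarrow> nat \<Rightarrow> (nat \<Rightarrow> nat \<Rightarrow> nat \<Rightarrow> complex) \<Rightarrow> (nat \<Rightarrow> complex) \<Rightarrow> nat \<Rightarrow> (nat \<Rightarrow> nat) \<Rightarrow> complex" where
  "measured_state d n e \<alpha> q a =
     \<alpha> (a 1) * (\<Prod>i\<in>{2..n}. Umat d e i (a (i - 1)) (a i)) * e n (a n) q"

(* State of Q A_1..A_n D_1..D_n after each D_i (initially |0>) amplifies A_i via
   |x>_{A_i}|0>_{D_i} |-> |x>_{A_i}|x>_{D_i}.  Component at (q, a, b), b = detector
   configuration. *)
definition amplified_state ::
  "nat \<Rightarrow> nat \<Rightarrow> (nat \<Rightarrow> nat \<Rightarrow> nat \<Rightarrow> complex) \<Rightarrow> (nat \<Rightarrow> complex) \<Rightarrow>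
   nat \<Rightarrow> (nat \<Rightarrow> nat) \<Rightarrow> (nat \<Rightarrow> nat) \<Rightarrow> complex" where
  "amplified_state d n e \<alpha> q a b =
     (if b = a then measured_state d n e \<alpha> q a else 0)"

(* Reduced density matrix of A_i: partial trace over Q, all other A_j and all D_j. *)
definition rho_A :: "nat \<Rightarrow> nat \<Rightarrow> (nat \<Rightarrow> nat \<Rightarrow> nat \<Rightarrow> complex) \<Rightarrow> (nat \<Rightarrow> complex) \<Rightarrow> nat \<Rightarrow> complex mat" where
  "rho_A d n e \<alpha> i = mat d d (\<lambda>(x, y).
     \<Sum>q<d. \<Sum>a\<in>{a\<in>cfg n d. a i = x}. \<Sum>b\<in>cfg n d.
       amplified_state d n e \<alpha> q a b * cnj (amplified_state d n e \<alpha> q (a(i := y)) b))"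

(* Reduced density matrix of D_i: partial trace over Q, all A_j and all other D_j. *)
definition rho_D :: "nat \<Rightarrow> nat \<Rightarrow> (nat \<Rightarrow> nat \<Rightarrow> nat \<Rightarrow> complex) \<Rightarrow> (nat \<Rightarrow> complex) \<Rightarrow> nat \<Rightarrow> complex mat" where
  "rho_D d n e \<alpha> i = mat d d (\<lambda>(x, y).
     \<Sum>q<d. \<Sum>a\<in>cfg n d. \<Sum>b\<in>{b\<in>cfg n d. b i = x}.
       amplified_state d n e \<alpha> q a b * cnj (amplified_state d n e \<alpha> q a (b(i := y))))"

end

theory Submission
  imports Defs
begin

text \<open>Amplification correlates each detector perfectly with its ancilla, so the joint state is
  supported on configurations with b = a. Tracing out everything but A_i, or everything
  but D_i, therefore kills all coherences and leaves in both cases the same diagonal matrix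
  of outcome probabilities of A_i; equal reduced states have equal entropy.\<close>

definition outcome_probability ::
  "nat \<Rightarrow> nat \<Rightarrow> (nat \<Rightarrow> nat \<Rightarrow> nat \<Rightarrow> complex) \<Rightarrow> (nat \<Rightarrow> complex) \<Rightarrow> nat \<Rightarrow> nat \<Rightarrow> complex" where
  "outcome_probability d n e \<alpha> i x =
     (\<Sum>q<d. \<Sum>a\<in>{a\<in>cfg n d. a i = x}. measured_state d n e \<alpha> q a * cnj (measured_state d n e \<alpha> q a))"

lemma finite_cfg: "finite (cfg n d)"
  unfolding cfg_def by (simp add: finite_PiE)

lemma sum_amplified_state:
  assumes "finite C"
  shows "(\<Sum>b\<in>C. amplified_state d n e \<alpha> q a b * h b)
    = (if a \<in> C then measured_state d n e \<alpha> q a * h a else 0)"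
proof -
  have "(\<Sum>b\<in>C. amplified_state d n e \<alpha> q a b * h b)
      = (\<Sum>b\<in>C. if b = a then measured_state d n e \<alpha> q a * h a else 0)"
    by (rule sum.cong) (auto simp: amplified_state_def)
  then show ?thesis
    using assms by (simp add: sum.delta')
qed

lemma rho_A_diagonal:
  "rho_A d n e \<alpha> i = mat d d (\<lambda>(x, y). if x = y then outcome_probability d n e \<alpha> i x else 0)"
    (is "_ = ?P")
proof (rule eq_matI)
  fix x y assume xy: "x < dim_row ?P" "y < dim_col ?P"
  have "(\<Sum>a\<in>{a\<in>cfg n d. a i = x}. \<Sum>b\<in>cfg n d.
          amplified_state d n e \<alpha> q a b * cnj (amplified_state d n e \<alpha> q (a(i := y)) b))
      = (if x = y then \<Sum>a\<in>{a\<in>cfg n d. a i = x}.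
          measured_state d n e \<alpha> q a * cnj (measured_state d n e \<alpha> q a) else 0)" for q
  proof -
    have "(\<Sum>b\<in>cfg n d. amplified_state d n e \<alpha> q a b * cnj (amplified_state d n e \<alpha> q (a(i := y)) b))
        = (if x = y then measured_state d n e \<alpha> q a * cnj (measured_state d n e \<alpha> q a) else 0)"
      if "a \<in> cfg n d" "a i = x" for a
      using that by (simp add: sum_amplified_state finite_cfg) (auto simp: amplified_state_def dest: fun_cong[where x = i])
    then show ?thesis
      by (simp add: sum.If_cases)
  qed
  then show "rho_A d n e \<alpha> i $$ (x, y) = ?P $$ (x, y)"
    using xy by (simp add: rho_A_def outcome_probability_def)
qed (simp_all add: rho_A_def)

lemma rho_D_diagonal:
  "rho_D d n e \<alpha> i = mat d d (\<lambda>(x, y). if x = y then outcome_probability d n e \<alpha> i x else 0)"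
    (is "_ = ?P")
proof (rule eq_matI)
  fix x y assume xy: "x < dim_row ?P" "y < dim_col ?P"
  have "(\<Sum>a\<in>cfg n d. \<Sum>b\<in>{b\<in>cfg n d. b i = x}.
          amplified_state d n e \<alpha> q a b * cnj (amplified_state d n e \<alpha> q a (b(i := y))))
      = (\<Sum>a\<in>cfg n d. if a i = x \<and> x = y
          then measured_state d n e \<alpha> q a * cnj (measured_state d n e \<alpha> q a) else 0)" for q
    by (rule sum.cong) (simp_all add: sum_amplified_state finite_cfg, auto simp: amplified_state_def dest: fun_cong[where x = i])
  also have "\<dots> q = (if x = y then \<Sum>a\<in>{a\<in>cfg n d. a i = x}.
          measured_state d n e \<alpha> q a * cnj (measured_state d n e \<alpha> q a) else 0)" for q
    using finite_cfg by (simp add: sum.inter_filter[symmetric])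
  finally show "rho_D d n e \<alpha> i $$ (x, y) = ?P $$ (x, y)"
    using xy by (simp add: rho_D_def outcome_probability_def)
qed (simp_all add: rho_D_def)

theorem lemma2:
  fixes d n :: nat and e :: "nat \<Rightarrow> nat \<Rightarrow> nat \<Rightarrow> complex" and \<alpha> :: "nat \<Rightarrow> complex"
  assumes "0 < d" and "1 \<le> n"
    and "\<forall>i\<in>{1..n}. orthonormal_basis d (e i)"
    and "(\<Sum>x<d. (cmod (\<alpha> x))\<^sup>2) = 1"
    and "i \<in> {1..n}"
  shows "vn_entropy d (rho_A d n e \<alpha> i) = vn_entropy d (rho_D d n e \<alpha> i)"
  by (simp only: rho_A_diagonal rho_D_diagonal)

end
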